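(* Let $V$ be a finite dimensional vector space over $\mathbb{R}$. A finite subset $A$ of $V$ generates a dense subsemigroup of the additive group $V$ if and only if the following two conditions hold: (a) the convex hull of $A$ contains $0$ in its interior; (b) the zero form is the only $\mathbb{R}$-linear form $l$ on $V$ with $l(A)\subset\mathbb{Z}$. *)

theory Defs
  imports "HOL-Analysis.Analysis"
begin

inductive_set add_subsemigroup_gen :: "'a::plus set \<Rightarrow> 'a set" for A :: "'a set" where
  gen: "x \<in> A \<Longrightarrow> x \<in> add_subsemigroup_gen A"
| add: "x \<in> add_subsemigroup_gen A \<Longrightarrow> y \<in> add_subsemigroup_gen A \<Longrightarrow> x + y \<in> add_subsemigroup_gen A"

end

theory Submission
  imports Defs
begin

text \<open>Necessity: if 0 is not interior to the convex hull of A, a closed half-space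
  {x. 0 \<le> v \<bullet> x} with v \<noteq> 0 contains A and hence the closure of the semigroup; a linear
  form that is integral on A is integral on the semigroup and, by continuity, on its closure.

  Sufficiency: if 0 is interior to the convex hull, each -a with a \<in> A is a nonnegative
  combination of A, and Dirichlet's simultaneous approximation puts -a into the closure G of
  the semigroup, which is therefore a closed subgroup. A proper closed subgroup G is its
  lineality space W plus a part spanned by vectors H \<subseteq> G independent of W, and G \<inter> span H
  is uniformly discrete. So the fractional parts of the H-coordinates of elements of G take
  only finitely many values, and by pigeonhole an integer multiple of a coordinate form is a
  nonzero linear form integral on G.\<close>

lemma add_subsemigroup_gen_subset:
  assumes "A \<subseteq> P" "\<And>x y. x \<in> P \<Longrightarrow> y \<in> P \<Longrightarrow> x + y \<in> P"
  shows "add_subsemigroup_gen A \<subseteq> P"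
proof
  fix x assume "x \<in> add_subsemigroup_gen A"
  then show "x \<in> P" by induct (use assms in auto)
qed

lemma convex_subset_halfspace_if_0_notin_interior:
  fixes C :: "'a::euclidean_space set"
  assumes "convex C" "0 \<notin> interior C"
  obtains v where "v \<noteq> 0" "\<And>x. x \<in> C \<Longrightarrow> 0 \<le> v \<bullet> x"
proof (cases "interior C = {}")
  case True
  then obtain a b where ab: "a \<noteq> 0" "C \<subseteq> {x. a \<bullet> x = b}"
    using empty_interior_subset_hyperplane[OF assms(1)] by blast
  show ?thesis
  proof (cases "b \<ge> 0")
    case True
    then show ?thesis using ab that[of a] by auto
  next
    case False
    then show ?thesis using ab by (intro that[of "-a"]) auto
  qed
next
  case False
  obtain v where v: "v \<noteq> 0" "\<And>x. x \<in> interior C \<Longrightarrow> 0 \<le> v \<bullet> x"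
    using separating_hyperplane_set_0[OF convex_interior[OF assms(1)] assms(2)] by blast
  have "closure (interior C) \<subseteq> {x. 0 \<le> v \<bullet> x}"
    by (rule closure_minimal) (use v closed_halfspace_ge[of 0 v] in auto)
  then show ?thesis
    using that[OF v(1)] convex_closure_interior[OF assms(1) False] closure_subset by blast
qed

lemma dense_add_subsemigroup_gen_imp_0_in_interior:
  fixes A :: "'a::euclidean_space set"
  assumes "closure (add_subsemigroup_gen A) = UNIV"
  shows "0 \<in> interior (convex hull A)"
proof (rule ccontr)
  assume "0 \<notin> interior (convex hull A)"
  then obtain v where v: "v \<noteq> 0" "\<And>x. x \<in> convex hull A \<Longrightarrow> 0 \<le> v \<bullet> x"
    using convex_subset_halfspace_if_0_notin_interior[OF convex_convex_hull] by blast
  have "add_subsemigroup_gen A \<subseteq> {x. 0 \<le> v \<bullet> x}"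
    by (rule add_subsemigroup_gen_subset) (use v hull_subset[of A convex] in \<open>auto simp: inner_add_right\<close>)
  then have "closure (add_subsemigroup_gen A) \<subseteq> {x. 0 \<le> v \<bullet> x}"
    by (rule closure_minimal) (rule closed_halfspace_ge)
  then have "0 \<le> v \<bullet> -v" using assms by blast
  then show False using v(1) by (metis inner_gt_zero_iff inner_minus_right neg_0_le_iff_le not_le)
qed

lemma dense_add_subsemigroup_gen_imp_no_integral_form:
  fixes A :: "'a::euclidean_space set" and l :: "'a \<Rightarrow> real"
  assumes "closure (add_subsemigroup_gen A) = UNIV" "linear l" "l ` A \<subseteq> \<int>"
  shows "l = (\<lambda>x. 0)"
proof
  have "add_subsemigroup_gen A \<subseteq> l -` \<int>"
    by (rule add_subsemigroup_gen_subset) (use assms(2,3) in \<open>auto simp: linear_add\<close>)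
  then have "closure (add_subsemigroup_gen A) \<subseteq> l -` \<int>"
    by (intro closure_minimal continuous_closed_vimage closed_Ints linear_continuous_at
        linear_conv_bounded_linear[THEN iffD1, OF assms(2)])
  then have integral: "l y \<in> \<int>" for y
    using assms(1) by blast
  fix x
  show "l x = 0"
  proof (rule ccontr)
    assume "l x \<noteq> 0"
    then have "l ((1 / (2 * l x)) *\<^sub>R x) = 1 / 2"
      by (simp add: linear_scale[OF assms(2)])
    moreover have "(1 / 2 :: real) \<notin> \<int>"
      by (auto elim!: Ints_cases)
    ultimately show False
      using integral by metis
  qed
qed

lemma fact_card_mult_in_Ints:
  fixes c :: real
  assumes "finite F" "\<And>k::nat. frac (real k * c) \<in> F"
  shows "real (fact (card F)) * c \<in> \<int>"
proof -
  have "\<not> inj_on (\<lambda>k. frac (real k * c)) {..card F}"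
    using card_inj_on_le[of _ "{..card F}" F] assms by fastforce
  then obtain i j where ij: "i < j" "j \<le> card F" "frac (real i * c) = frac (real j * c)"
    unfolding inj_on_def by (metis atMost_iff nat_neq_iff)
  then obtain n where "real j * c = real i * c + of_int n"
    by (metis frac_eqE)
  then have "real (j - i) * c \<in> \<int>"
    using ij(1) by (simp add: of_nat_diff left_diff_distrib)
  moreover have "(j - i) dvd fact (card F)"
    using ij by (intro dvd_fact) auto
  then obtain q where "fact (card F) = (j - i) * q" ..
  then have "real (fact (card F)) * c = real q * (real (j - i) * c)"
    by simp
  ultimately show ?thesis
    by (metis Ints_mult Ints_of_nat)
qed

lemma linear_sum_scaleR_dual_basis:
  assumes "linear f" "finite H" "h \<in> H" "\<And>b. b \<in> H \<Longrightarrow> f b = (if b = h then 1 else 0)"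
  shows "f (\<Sum>b\<in>H. t b *\<^sub>R b) = t h"
proof -
  have "f (\<Sum>b\<in>H. t b *\<^sub>R b) = (\<Sum>b\<in>H. t b * f b)"
    by (simp add: linear_sum[OF assms(1)] linear_scale[OF assms(1)])
  also have "\<dots> = (\<Sum>b\<in>H. if b = h then t h else 0)"
    using assms(4) by (intro sum.cong) auto
  also have "\<dots> = t h"
    using assms(2,3) by simp
  finally show ?thesis .
qed

lemma coordinate_formsE:
  fixes B :: "'a::euclidean_space set"
  assumes "independent B"
  obtains E and c :: "'a \<Rightarrow> 'a \<Rightarrow> real"
  where "B \<subseteq> E"
    and "\<And>b. linear (c b)"
    and "\<And>b b'. b \<in> E \<Longrightarrow> b' \<in> E \<Longrightarrow> c b b' = (if b' = b then 1 else 0)"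
    and "\<And>B' b y. B' \<subseteq> E \<Longrightarrow> y \<in> span B' \<Longrightarrow> b \<notin> B' \<Longrightarrow> c b y = 0"
    and "\<And>y. y \<in> span B \<Longrightarrow> y = (\<Sum>b\<in>B. c b y *\<^sub>R b)"
proof -
  define E where "E = extend_basis B"
  define c where "c b v = representation E v b" for b v
  have E: "independent E" "span E = UNIV" "B \<subseteq> E"
    unfolding E_def using assms by (simp_all add: independent_extend_basis extend_basis_superset)
  have c_span: "c b y = representation B' y b" if "B' \<subseteq> E" "y \<in> span B'" for B' b y
    unfolding c_def using representation_extend[OF E(1) that(2,1)] by simp
  show ?thesis
  proof (rule that[OF E(3)])
    show "linear (c b)" for b
      unfolding c_def using E(1,2)
      by (intro linearI) (simp_all add: representation_add representation_scale)
    show "c b b' = (if b' = b then 1 else 0)" if "b \<in> E" "b' \<in> E" for b b'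
      unfolding c_def using representation_basis[OF E(1) that(2)] by auto
    show "c b y = 0" if "B' \<subseteq> E" "y \<in> span B'" "b \<notin> B'" for B' b y
      using c_span[OF that(1,2)] representation_ne_zero[of B' y b] that(3) by auto
    show "y = (\<Sum>b\<in>B. c b y *\<^sub>R b)" if "y \<in> span B" for y
    proof -
      have "finite B"
        using assms independent_bound by blast
      then show ?thesis
        using sum_representation_eq[OF assms that _ order_refl] c_span[OF E(3) that] by simp
    qed
  qed
qed

lemma span_Int_span_eq_0:
  fixes A B :: "'a::euclidean_space set"
  assumes "independent (A \<union> B)" "A \<inter> B = {}"
  shows "span A \<inter> span B = {0}"
proof -
  obtain E and c :: "'a \<Rightarrow> 'a \<Rightarrow> real" where E: "A \<union> B \<subseteq> E"
    and c_vanish: "\<And>B' b y. B' \<subseteq> E \<Longrightarrow> y \<in> span B' \<Longrightarrow> b \<notin> B' \<Longrightarrow> c b y = 0"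
    and expand: "\<And>y. y \<in> span (A \<union> B) \<Longrightarrow> y = (\<Sum>b\<in>A \<union> B. c b y *\<^sub>R b)"
    by (rule coordinate_formsE[OF assms(1)]) blast
  have "x = 0" if x: "x \<in> span A" "x \<in> span B" for x
  proof -
    have "c b x = 0" if "b \<in> A \<union> B" for b
    proof (cases "b \<in> A")
      case True
      then show ?thesis
        using c_vanish[OF _ x(2)] E assms(2) by blast
    next
      case False
      then show ?thesis
        using c_vanish[OF _ x(1)] E by blast
    qed
    moreover have "x \<in> span (A \<union> B)"
      using x(1) span_mono[of A "A \<union> B"] by blast
    ultimately show "x = 0"
      using expand[of x] by simp
  qed
  then show ?thesis
    by (auto simp: span_zero)
qed

lemma linear_form_vanishing_on_proper_span:
  fixes S :: "'a::euclidean_space set"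
  assumes "span S \<noteq> UNIV"
  obtains l :: "'a \<Rightarrow> real" where "linear l" "l \<noteq> (\<lambda>x. 0)" "\<And>x. x \<in> span S \<Longrightarrow> l x = 0"
proof -
  have "dim S < DIM('a)"
    using assms dim_eq_full[of S] dim_subset_UNIV[of S] by linarith
  then obtain v where v: "v \<noteq> 0" "span S \<subseteq> {x. v \<bullet> x = 0}"
    using lowdim_subset_hyperplane by blast
  show ?thesis
  proof (rule that[of "\<lambda>x. v \<bullet> x"])
    show "linear (\<lambda>x. v \<bullet> x)"
      by (rule bounded_linear.linear[OF bounded_linear_inner_right])
    show "(\<lambda>x. v \<bullet> x) \<noteq> (\<lambda>x. 0)"
      using v(1) by (metis inner_eq_zero_iff)
    show "v \<bullet> x = 0" if "x \<in> span S" for x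
      using v(2) that by blast
  qed
qed

locale closed_add_subgroup =
  fixes G :: "'a::euclidean_space set"
  assumes closed: "closed G"
    and zero_mem: "0 \<in> G"
    and add_mem: "\<And>x y. x \<in> G \<Longrightarrow> y \<in> G \<Longrightarrow> x + y \<in> G"
    and uminus_mem: "\<And>x. x \<in> G \<Longrightarrow> -x \<in> G"
begin

lemma diff_mem: "x \<in> G \<Longrightarrow> y \<in> G \<Longrightarrow> x - y \<in> G"
  by (metis add_mem uminus_mem diff_conv_add_uminus)

lemma of_int_scaleR_mem:
  assumes "x \<in> G"
  shows "of_int k *\<^sub>R x \<in> G"
proof -
  have nat_mem: "of_nat n *\<^sub>R x \<in> G" for n
    by (induction n) (auto simp: zero_mem add_mem assms algebra_simps)
  show ?thesis
  proof (cases k rule: int_cases)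
    case (nonneg n)
    then show ?thesis using nat_mem by simp
  next
    case (neg n)
    then show ?thesis using nat_mem uminus_mem by (metis of_int_minus of_int_of_nat_eq scaleR_minus_left)
  qed
qed

lemma sum_mem: "(\<And>i. i \<in> I \<Longrightarrow> g i \<in> G) \<Longrightarrow> sum g I \<in> G"
  by (induction I rule: infinite_finite_induct) (auto simp: zero_mem add_mem)

definition lineality_space :: "'a set" where
  "lineality_space = {x. \<forall>t. t *\<^sub>R x \<in> G}"

lemma subspace_lineality_space: "subspace lineality_space"
  unfolding subspace_def lineality_space_def by (auto simp: zero_mem scaleR_add_right add_mem)

lemma lineality_space_subset: "lineality_space \<subseteq> G"
  unfolding lineality_space_def by (metis (mono_tags) mem_Collect_eq scaleR_one subsetI)

lemma limit_direction_in_lineality_space: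
  assumes "\<And>k. x k \<in> G" "\<And>k. x k \<noteq> 0" "x \<longlonglongrightarrow> 0"
    and "(\<lambda>k. x k /\<^sub>R norm (x k)) \<longlonglongrightarrow> u"
  shows "u \<in> lineality_space"
  unfolding lineality_space_def
proof (intro CollectI allI)
  fix t :: real
  define n where "n k = \<lfloor>t / norm (x k)\<rfloor>" for k
  have "(\<lambda>k. (of_int (n k) - t / norm (x k)) *\<^sub>R x k) \<longlonglongrightarrow> 0"
  proof (rule Lim_null_comparison)
    have "\<bar>of_int (n k) - t / norm (x k)\<bar> \<le> 1" for k
      unfolding n_def by linarith
    then show "\<forall>\<^sub>F k in sequentially. norm ((of_int (n k) - t / norm (x k)) *\<^sub>R x k) \<le> norm (x k)"
      by (intro always_eventually allI) (simp add: mult_left_le_one_le)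
    show "(\<lambda>k. norm (x k)) \<longlonglongrightarrow> 0"
      using assms(3) by (rule tendsto_norm_zero)
  qed
  then have "(\<lambda>k. t *\<^sub>R (x k /\<^sub>R norm (x k)) + (of_int (n k) - t / norm (x k)) *\<^sub>R x k)
      \<longlonglongrightarrow> t *\<^sub>R u + 0"
    by (intro tendsto_add tendsto_scaleR tendsto_const assms(4))
  moreover have "(\<lambda>k. t *\<^sub>R (x k /\<^sub>R norm (x k)) + (of_int (n k) - t / norm (x k)) *\<^sub>R x k)
      = (\<lambda>k. of_int (n k) *\<^sub>R x k)"
  proof
    fix k
    show "t *\<^sub>R (x k /\<^sub>R norm (x k)) + (of_int (n k) - t / norm (x k)) *\<^sub>R x k = of_int (n k) *\<^sub>R x k"
      using assms(2)[of k] by (simp add: scaleR_diff_left divide_inverse_commute)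
  qed
  ultimately have lim: "(\<lambda>k. of_int (n k) *\<^sub>R x k) \<longlonglongrightarrow> t *\<^sub>R u"
    by (simp only: add_0_right)
  show "t *\<^sub>R u \<in> G"
    by (rule closed_sequentially[OF closed _ lim]) (rule of_int_scaleR_mem[OF assms(1)])
qed

lemma norm_bounded_below_Int_subspace:
  assumes "subspace U" "U \<inter> lineality_space = {0}"
  shows "\<exists>\<delta>>0. \<forall>x\<in>G \<inter> U. x \<noteq> 0 \<longrightarrow> \<delta> \<le> norm x"
proof (rule ccontr)
  assume no_gap: "\<not> ?thesis"
  have "\<exists>x. x \<in> G \<and> x \<in> U \<and> x \<noteq> 0 \<and> norm x < inverse (Suc k)" for k :: nat
  proof -
    have "inverse (real (Suc k)) > 0"
      by simp
    with no_gap obtain y where "y \<in> G \<inter> U" "y \<noteq> 0" "\<not> inverse (real (Suc k)) \<le> norm y"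
      by blast
    then show ?thesis
      by (metis IntD1 IntD2 not_le)
  qed
  then obtain x where x: "\<And>k. x k \<in> G" "\<And>k. x k \<in> U" "\<And>k. x k \<noteq> 0"
    "\<And>k. norm (x k) < inverse (Suc k)"
    by metis
  have x_null: "x \<longlonglongrightarrow> 0"
  proof (rule Lim_null_comparison)
    show "\<forall>\<^sub>F k in sequentially. norm (x k) \<le> inverse (Suc k)"
      by (intro always_eventually allI less_imp_le x(4))
    show "(\<lambda>k. inverse (real (Suc k))) \<longlonglongrightarrow> 0"
      by (rule LIMSEQ_inverse_real_of_nat)
  qed
  define u where "u k = x k /\<^sub>R norm (x k)" for k
  have u_mem: "\<forall>k. u k \<in> sphere 0 1 \<inter> U"
    using x(2,3) assms(1) by (simp add: u_def subspace_scale)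
  have "compact (sphere (0::'a) 1 \<inter> U)"
    using assms(1) by (intro compact_Int_closed compact_sphere closed_subspace)
  then obtain u0 r where u0: "u0 \<in> sphere 0 1 \<inter> U" "strict_mono r" "(u \<circ> r) \<longlonglongrightarrow> u0"
    using seq_compactE[OF compact_imp_seq_compact u_mem] by blast
  have "u0 \<in> lineality_space"
    using x_null u0(3) LIMSEQ_subseq_LIMSEQ[OF x_null u0(2)] x(1,3)
    by (intro limit_direction_in_lineality_space[of "x \<circ> r"]) (auto simp: u_def o_def)
  then have "u0 = 0"
    using u0(1) assms(2) by blast
  then show False
    using u0(1) by simp
qed

lemma uniform_discrete_Int_subspace:
  assumes "subspace U" "U \<inter> lineality_space = {0}"
  shows "uniform_discrete (G \<inter> U)"
proof -
  obtain \<delta> where "\<delta> > 0" "\<And>x. x \<in> G \<inter> U \<Longrightarrow> x \<noteq> 0 \<Longrightarrow> \<delta> \<le> norm x"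
    using norm_bounded_below_Int_subspace[OF assms] by blast
  then show ?thesis
    using assms(1) diff_mem by (intro uniformI2[of \<delta>]) (auto simp: dist_norm subspace_diff)
qed

lemma finite_Int_subspace_cball:
  assumes "subspace U" "U \<inter> lineality_space = {0}"
  shows "finite (G \<inter> U \<inter> cball 0 R)"
proof -
  have "uniform_discrete (G \<inter> U \<inter> cball 0 R)"
    using uniform_discrete_Int_subspace[OF assms] by (rule uniform_discrete_subset) auto
  moreover have "bounded (G \<inter> U \<inter> cball 0 R)"
    by (rule bounded_subset[OF bounded_cball]) auto
  ultimately show ?thesis
    using uniform_discrete_finite_iff by blast
qed

lemma frac_coordinates_mem:
  assumes "H \<subseteq> G" "y \<in> G" "y - (\<Sum>b\<in>H. c b y *\<^sub>R b) \<in> G"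
  shows "(\<Sum>b\<in>H. frac (c b y) *\<^sub>R b) \<in> G"
proof -
  define z where "z = y - (\<Sum>b\<in>H. c b y *\<^sub>R b)"
  define w where "w = (\<Sum>b\<in>H. of_int \<lfloor>c b y\<rfloor> *\<^sub>R b)"
  have "(\<Sum>b\<in>H. frac (c b y) *\<^sub>R b) = (y - z) - w"
    unfolding z_def w_def frac_def by (simp add: scaleR_diff_left sum_subtractf)
  moreover have "w \<in> G"
    unfolding w_def using assms(1) by (intro sum_mem of_int_scaleR_mem) auto
  ultimately show ?thesis
    using assms(2,3) by (simp add: z_def[symmetric] diff_mem)
qed

lemma coordinate_multiple_in_Ints:
  assumes H: "finite H" "H \<subseteq> G" "span H \<inter> lineality_space = {0}" "h \<in> H"
    and c: "\<And>b. linear (c b)" "\<And>b b'. b \<in> H \<Longrightarrow> b' \<in> H \<Longrightarrow> c b b' = (if b' = b then 1 else 0)"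
    and reduce: "\<And>y. y \<in> G \<Longrightarrow> y - (\<Sum>b\<in>H. c b y *\<^sub>R b) \<in> G"
  obtains N :: nat where "N > 0" "\<And>x. x \<in> G \<Longrightarrow> real N * c h x \<in> \<int>"
proof -
  \<comment> \<open>Replacing the H-coordinates of y by their fractional parts stays in G and lands in
    the finite set F, so c h takes only finitely many fractional values on G.\<close>
  define r where "r y = (\<Sum>b\<in>H. frac (c b y) *\<^sub>R b)" for y
  define F where "F = G \<inter> span H \<inter> cball 0 (\<Sum>b\<in>H. norm b)"
  have "finite F"
    unfolding F_def using H(3) by (intro finite_Int_subspace_cball) (auto simp: Int_commute)
  have r_mem: "r y \<in> F" if "y \<in> G" for y
  proof -
    have "norm (frac (c b y) *\<^sub>R b) \<le> norm b" for b
      using frac_lt_1[of "c b y"] by (simp add: mult_left_le_one_le)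
    then have "norm (r y) \<le> (\<Sum>b\<in>H. norm b)"
      unfolding r_def by (rule order_trans[OF norm_sum sum_mono])
    moreover have "r y \<in> G"
      unfolding r_def using H(2) that reduce[OF that] by (rule frac_coordinates_mem)
    moreover have "r y \<in> span H"
      unfolding r_def by (intro span_sum span_scale span_base)
    ultimately show ?thesis
      unfolding F_def by simp
  qed
  have c_r: "c h (r y) = frac (c h y)" for y
    unfolding r_def using c(1) H(1,4) c(2)[OF H(4)] by (rule linear_sum_scaleR_dual_basis)
  have "real (fact (card (c h ` F))) * c h x \<in> \<int>" if "x \<in> G" for x
  proof (rule fact_card_mult_in_Ints)
    show "finite (c h ` F)"
      using \<open>finite F\<close> by simp
    show "frac (real k * c h x) \<in> c h ` F" for k
    proof -
      have "real k *\<^sub>R x \<in> G"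
        using of_int_scaleR_mem[OF that, of "int k"] by simp
      then have "c h (r (real k *\<^sub>R x)) \<in> c h ` F"
        using r_mem by blast
      then show ?thesis
        by (simp add: c_r linear_scale[OF c(1)])
    qed
  qed
  then show ?thesis
    using that[of "fact (card (c h ` F))"] by simp
qed

lemma integral_form_if_independent_complement:
  assumes B: "independent (B0 \<union> H)" "B0 \<inter> H = {}" "G \<subseteq> span (B0 \<union> H)"
    and B0: "span B0 = lineality_space" and H: "H \<subseteq> G" "h \<in> H"
  obtains l :: "'a \<Rightarrow> real" where "linear l" "l \<noteq> (\<lambda>x. 0)" "\<And>x. x \<in> G \<Longrightarrow> l x \<in> \<int>"
proof -
  obtain E and c :: "'a \<Rightarrow> 'a \<Rightarrow> real" where E: "B0 \<union> H \<subseteq> E"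
    and c_linear: "\<And>b. linear (c b)"
    and c_basis: "\<And>b b'. b \<in> E \<Longrightarrow> b' \<in> E \<Longrightarrow> c b b' = (if b' = b then 1 else 0)"
    and expand: "\<And>y. y \<in> span (B0 \<union> H) \<Longrightarrow> y = (\<Sum>b\<in>B0 \<union> H. c b y *\<^sub>R b)"
    by (rule coordinate_formsE[OF B(1)]) blast
  have fin: "finite B0" "finite H"
    using B(1) independent_bound by auto
  have Int_lineality: "span H \<inter> lineality_space = {0}"
    using span_Int_span_eq_0[OF B(1,2)] B0 by blast
  have reduce: "y - (\<Sum>b\<in>H. c b y *\<^sub>R b) \<in> G" if "y \<in> G" for y
  proof -
    have "y = (\<Sum>b\<in>B0. c b y *\<^sub>R b) + (\<Sum>b\<in>H. c b y *\<^sub>R b)"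
      using expand[of y] that B(3) sum.union_disjoint[OF fin B(2), of "\<lambda>b. c b y *\<^sub>R b"]
      by (metis subsetD)
    moreover have "(\<Sum>b\<in>B0. c b y *\<^sub>R b) \<in> span B0"
      by (intro span_sum span_scale span_base)
    then have "(\<Sum>b\<in>B0. c b y *\<^sub>R b) \<in> G"
      using B0 lineality_space_subset by blast
    ultimately show ?thesis
      by (metis add_diff_cancel_right')
  qed
  have c_basis_H: "c b b' = (if b' = b then 1 else 0)" if "b \<in> H" "b' \<in> H" for b b'
    using c_basis E that by blast
  obtain N :: nat where N: "N > 0" "\<And>x. x \<in> G \<Longrightarrow> real N * c h x \<in> \<int>"
    using coordinate_multiple_in_Ints[OF fin(2) H(1) Int_lineality H(2) c_linear c_basis_H reduce] by blast
  show ?thesis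
  proof (rule that[of "\<lambda>x. real N * c h x"])
    show "linear (\<lambda>x. real N * c h x)"
      by (intro linearI) (simp_all add: linear_add[OF c_linear] linear_scale[OF c_linear] algebra_simps)
    have "real N * c h h \<noteq> 0"
      using c_basis_H[OF H(2) H(2)] N(1) by simp
    then show "(\<lambda>x. real N * c h x) \<noteq> (\<lambda>x. 0)"
      by metis
    show "real N * c h x \<in> \<int>" if "x \<in> G" for x
      using N(2) that .
  qed
qed

lemma integral_form_if_proper:
  assumes "G \<noteq> UNIV"
  obtains l :: "'a \<Rightarrow> real" where "linear l" "l \<noteq> (\<lambda>x. 0)" "\<And>x. x \<in> G \<Longrightarrow> l x \<in> \<int>"
proof -
  obtain B0 where B0: "B0 \<subseteq> lineality_space" "independent B0" "lineality_space \<subseteq> span B0"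
    by (rule maximal_independent_subset)
  have span_B0: "span B0 = lineality_space"
    using span_minimal[OF B0(1) subspace_lineality_space] B0(3) by blast
  \<comment> \<open>The vectors H added to a basis of the lineality space span the discrete part of G.\<close>
  obtain B where B: "B0 \<subseteq> B" "B \<subseteq> B0 \<union> G" "independent B" "B0 \<union> G \<subseteq> span B"
    by (rule maximal_independent_subset_extend[of B0 "B0 \<union> G"]) (use B0 in auto)
  define H where "H = B - B0"
  have B_split: "B = B0 \<union> H" "B0 \<inter> H = {}" "H \<subseteq> G"
    using B(1,2) unfolding H_def by auto
  show ?thesis
  proof (cases "H = {}")
    case True
    then have "G = span B0"
      using B(4) B_split(1) span_B0 lineality_space_subset by auto
    then show ?thesis
      using linear_form_vanishing_on_proper_span[of B0] assms that by (metis Ints_0)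
  next
    case False
    then obtain h where "h \<in> H"
      by blast
    then show ?thesis
      using integral_form_if_independent_complement[OF _ B_split(2) _ span_B0 B_split(3)] B B_split(1) that
      by auto
  qed
qed

end

lemma nonneg_combination_if_0_in_interior_convex_hull:
  fixes A :: "'a::euclidean_space set"
  assumes "finite A" "0 \<in> interior (convex hull A)"
  obtains \<nu> where "\<And>b. b \<in> A \<Longrightarrow> 0 \<le> \<nu> b" "x = (\<Sum>b\<in>A. \<nu> b *\<^sub>R b)"
proof -
  obtain \<epsilon> where \<epsilon>: "\<epsilon> > 0" "ball 0 \<epsilon> \<subseteq> convex hull A"
    using assms(2) mem_interior by blast
  define t where "t = \<epsilon> / (2 * (norm x + 1))"
  have t: "t > 0"
    unfolding t_def using \<epsilon>(1) by (simp add: add_nonneg_pos)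
  have "norm (t *\<^sub>R x) < \<epsilon>"
  proof -
    have "norm (t *\<^sub>R x) = \<epsilon> * (norm x / (2 * (norm x + 1)))"
      unfolding t_def using \<epsilon>(1) by simp
    also have "\<dots> < \<epsilon> * 1"
    proof (rule mult_strict_left_mono[OF _ \<epsilon>(1)])
      have "norm x < 2 * (norm x + 1)"
        by (simp add: add_nonneg_pos)
      then show "norm x / (2 * (norm x + 1)) < 1"
        by (simp add: divide_less_eq add_nonneg_pos)
    qed
    finally show ?thesis
      by simp
  qed
  then have "t *\<^sub>R x \<in> convex hull A"
    using \<epsilon>(2) by auto
  then obtain u where u: "\<forall>b\<in>A. 0 \<le> u b" "(\<Sum>b\<in>A. u b *\<^sub>R b) = t *\<^sub>R x"
    unfolding convex_hull_finite[OF assms(1)] by blast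
  show ?thesis
  proof (rule that[of "\<lambda>b. u b / t"])
    show "0 \<le> u b / t" if "b \<in> A" for b
      using u(1) that t by simp
    have "(\<Sum>b\<in>A. (u b / t) *\<^sub>R b) = (1 / t) *\<^sub>R (\<Sum>b\<in>A. u b *\<^sub>R b)"
      by (simp add: scaleR_sum_right)
    then show "x = (\<Sum>b\<in>A. (u b / t) *\<^sub>R b)"
      using u(2) t by simp
  qed
qed

lemma Dirichlet_approx_simult_nonneg:
  fixes \<nu> :: "'a \<Rightarrow> real" and N :: nat
  assumes "finite B" "N > 0" "\<And>b. b \<in> B \<Longrightarrow> 0 \<le> \<nu> b"
  obtains q :: nat and p :: "'a \<Rightarrow> nat"
  where "q > 0" "\<And>b. b \<in> B \<Longrightarrow> \<bar>real q * \<nu> b - real (p b)\<bar> < 1 / N"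
proof -
  obtain f where f: "bij_betw f {..<card B} B"
    using ex_bij_betw_nat_finite[OF assms(1)] unfolding atLeast0LessThan by blast
  define g where "g = inv_into {..<card B} f"
  have g: "g b < card B" "f (g b) = b" if "b \<in> B" for b
    using that f bij_betw_inv_into_left[OF f] bij_betwE[OF bij_betw_inv_into[OF f]]
      bij_betw_inv_into_right[OF f] unfolding g_def by auto
  obtain q p where q: "0 < q"
    and pq: "\<And>i. i < card B \<Longrightarrow> \<bar>of_int q * \<nu> (f i) - of_int (p i)\<bar> < 1 / N"
    using Dirichlet_approx_simult[OF assms(2), where \<theta>="\<lambda>i. \<nu> (f i)" and n="card B"] by blast
  have pq_B: "\<bar>of_int q * \<nu> b - of_int (p (g b))\<bar> < 1 / N" if "b \<in> B" for b
    using pq[OF g(1)[OF that]] g(2)[OF that] by simp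
  have p_nonneg: "0 \<le> p (g b)" if "b \<in> B" for b
  proof -
    have "0 \<le> of_int q * \<nu> b"
      using q assms(3)[OF that] by simp
    moreover have "1 / real N \<le> 1"
      using assms(2) by simp
    ultimately have "(-1::real) < of_int (p (g b))"
      using pq_B[OF that] by linarith
    then show ?thesis
      by linarith
  qed
  show ?thesis
  proof (rule that[of "nat q" "\<lambda>b. nat (p (g b))"])
    show "0 < nat q"
      using q by simp
    show "\<bar>real (nat q) * \<nu> b - real (nat (p (g b)))\<bar> < 1 / N" if "b \<in> B" for b
      using pq_B[OF that] p_nonneg[OF that] q by simp
  qed
qed

lemma of_nat_scaleR_mem_if_add_closed:
  fixes M :: "'a::real_vector set"
  assumes "0 \<in> M" "\<And>x y. x \<in> M \<Longrightarrow> y \<in> M \<Longrightarrow> x + y \<in> M" "x \<in> M"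
  shows "of_nat k *\<^sub>R x \<in> M"
  using assms(3) by (induction k) (simp_all add: assms(1,2) scaleR_add_left)

lemma nat_combination_mem_if_add_closed:
  fixes M :: "'a::real_vector set"
  assumes "0 \<in> M" "\<And>x y. x \<in> M \<Longrightarrow> y \<in> M \<Longrightarrow> x + y \<in> M" "\<And>i. i \<in> I \<Longrightarrow> g i \<in> M"
  shows "(\<Sum>i\<in>I. of_nat (m i) *\<^sub>R g i) \<in> M"
  using assms(3)
  by (induction I rule: infinite_finite_induct)
    (simp_all add: assms(1,2) of_nat_scaleR_mem_if_add_closed[OF assms(1,2)])

lemma norm_sum_scaleR_le:
  fixes B :: "'a::real_normed_vector set"
  assumes "\<And>b. b \<in> B \<Longrightarrow> \<bar>t b\<bar> \<le> \<delta>"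
  shows "norm (\<Sum>b\<in>B. t b *\<^sub>R b) \<le> \<delta> * (\<Sum>b\<in>B. norm b)"
proof -
  have "norm (\<Sum>b\<in>B. t b *\<^sub>R b) \<le> (\<Sum>b\<in>B. \<bar>t b\<bar> * norm b)"
    using norm_sum[of "\<lambda>b. t b *\<^sub>R b" B] by simp
  also have "\<dots> \<le> (\<Sum>b\<in>B. \<delta> * norm b)"
    using assms by (intro sum_mono mult_right_mono) auto
  finally show ?thesis
    by (simp add: sum_distrib_left)
qed

lemma neg_in_closure_if_nonneg_combination:
  fixes M :: "'a::real_normed_vector set"
  assumes M: "0 \<in> M" "\<And>x y. x \<in> M \<Longrightarrow> y \<in> M \<Longrightarrow> x + y \<in> M"
    and a: "a \<in> M" and B: "finite B" "B \<subseteq> M"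
    and \<nu>: "\<And>b. b \<in> B \<Longrightarrow> 0 \<le> \<nu> b" "-a = (\<Sum>b\<in>B. \<nu> b *\<^sub>R b)"
  shows "-a \<in> closure M"
  unfolding closure_approachable
proof (intro allI impI)
  fix e :: real
  assume e: "e > 0"
  define K where "K = (\<Sum>b\<in>B. norm b)"
  obtain N :: nat where N: "N > 0" "K / N < e"
  proof -
    obtain m :: nat where "K / e < real m"
      using reals_Archimedean2 by blast
    then have "K < e * real (Suc m)"
      using e by (simp add: pos_divide_less_eq algebra_simps)
    then show thesis
      by (intro that[of "Suc m"]) (simp_all add: pos_divide_less_eq mult.commute)
  qed
  \<comment> \<open>If q \<nu> b is within 1/N of the integer p b for every b, then the element
    \<Sum>b. p b b + (q - 1) a of M lies within K/N of -a.\<close>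
  obtain q :: nat and p where q: "q > 0" and pq: "\<And>b. b \<in> B \<Longrightarrow> \<bar>real q * \<nu> b - real (p b)\<bar> < 1 / N"
  proof (rule Dirichlet_approx_simult_nonneg[OF B(1) N(1) \<nu>(1)])
    fix q :: nat and p :: "'a \<Rightarrow> nat"
    assume "q > 0" "\<And>b. b \<in> B \<Longrightarrow> \<bar>real q * \<nu> b - real (p b)\<bar> < 1 / N"
    then show thesis
      by (rule that)
  qed
  define z where "z = (\<Sum>b\<in>B. of_nat (p b) *\<^sub>R b) + of_nat (q - 1) *\<^sub>R a"
  have "z \<in> M"
    unfolding z_def using B(2) a
    by (intro M(2) nat_combination_mem_if_add_closed[OF M] of_nat_scaleR_mem_if_add_closed[OF M])
      auto
  have "z + a = (\<Sum>b\<in>B. of_nat (p b) *\<^sub>R b) + real q *\<^sub>R a"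
    unfolding z_def using q by (simp add: of_nat_diff algebra_simps)
  also have "real q *\<^sub>R a = - (\<Sum>b\<in>B. (real q * \<nu> b) *\<^sub>R b)"
    using arg_cong[OF \<nu>(2), of "\<lambda>v. - (real q *\<^sub>R v)"] by (simp add: scaleR_sum_right)
  also have "(\<Sum>b\<in>B. of_nat (p b) *\<^sub>R b) + - (\<Sum>b\<in>B. (real q * \<nu> b) *\<^sub>R b)
      = (\<Sum>b\<in>B. (real (p b) - real q * \<nu> b) *\<^sub>R b)"
    by (simp add: scaleR_diff_left sum_subtractf)
  finally have "norm (z + a) = norm (\<Sum>b\<in>B. (real (p b) - real q * \<nu> b) *\<^sub>R b)"
    by (rule arg_cong)
  also have "\<dots> \<le> 1 / N * K"
    unfolding K_def using pq by (intro norm_sum_scaleR_le) (simp add: abs_minus_commute less_imp_le)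
  finally have "dist z (-a) < e"
    using N(2) by (simp add: dist_norm)
  with \<open>z \<in> M\<close> show "\<exists>y\<in>M. dist y (-a) < e"
    by blast
qed

lemma closure_add_closed:
  fixes S :: "'a::real_normed_vector set"
  assumes "\<And>x y. x \<in> S \<Longrightarrow> y \<in> S \<Longrightarrow> x + y \<in> S" "x \<in> closure S" "y \<in> closure S"
  shows "x + y \<in> closure S"
proof -
  have "closure S + closure S \<subseteq> closure S"
    using closure_sum[of S S] closure_mono[of "S + S" S] assms(1) by (auto simp: set_plus_def)
  then show ?thesis using assms(2,3) by (auto simp: set_plus_def)
qed

lemma uminus_mem_closure_add_subsemigroup_gen:
  fixes A :: "'a::real_normed_vector set"
  assumes "\<And>a. a \<in> A \<Longrightarrow> -a \<in> closure (add_subsemigroup_gen A)"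
    and "x \<in> closure (add_subsemigroup_gen A)"
  shows "-x \<in> closure (add_subsemigroup_gen A)"
proof -
  define S where "S = add_subsemigroup_gen A"
  have "add_subsemigroup_gen A \<subseteq> uminus -` closure S"
  proof (rule add_subsemigroup_gen_subset)
    show "A \<subseteq> uminus -` closure S"
      using assms(1) unfolding S_def by blast
    show "x + y \<in> uminus -` closure S" if "x \<in> uminus -` closure S" "y \<in> uminus -` closure S" for x y
    proof -
      have neg_yx: "-y \<in> closure S" "-x \<in> closure S"
        using that by auto
      have "-y + -x \<in> closure S"
        using add_subsemigroup_gen.add neg_yx unfolding S_def by (rule closure_add_closed)
      then show ?thesis
        by (simp add: add.commute)
    qed
  qed
  then have "closure S \<subseteq> uminus -` closure S"
    unfolding S_def[symmetric]
    by (intro closure_minimal continuous_closed_vimage closed_closure continuous_intros)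
  then show ?thesis
    using assms(2) unfolding S_def by blast
qed

lemma neg_mem_closure_add_subsemigroup_gen:
  fixes A :: "'a::euclidean_space set"
  assumes "finite A" "0 \<in> interior (convex hull A)" "a \<in> A"
  shows "-a \<in> closure (add_subsemigroup_gen A)"
proof -
  define S where "S = add_subsemigroup_gen A"
  have A_S: "A \<subseteq> S"
    unfolding S_def by (blast intro: add_subsemigroup_gen.gen)
  obtain \<nu> where \<nu>: "\<And>b. b \<in> A \<Longrightarrow> 0 \<le> \<nu> b" "-a = (\<Sum>b\<in>A. \<nu> b *\<^sub>R b)"
    using nonneg_combination_if_0_in_interior_convex_hull[OF assms(1,2)] by blast
  have "-a \<in> closure (insert 0 S)"
  proof (rule neg_in_closure_if_nonneg_combination[OF _ _ _ assms(1) _ \<nu>])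
    show "x + y \<in> insert 0 S" if "x \<in> insert 0 S" "y \<in> insert 0 S" for x y
      using that add_subsemigroup_gen.add unfolding S_def by auto
  qed (use assms(3) A_S in auto)
  then have "-a \<in> insert 0 (closure S)"
    by (simp add: closure_insert)
  moreover have "a \<in> closure S"
    using assms(3) A_S closure_subset by blast
  ultimately show ?thesis
    unfolding S_def by (metis insertE neg_equal_0_iff_equal)
qed

lemma closed_add_subgroup_closure_add_subsemigroup_gen:
  fixes A :: "'a::euclidean_space set"
  assumes "finite A" "0 \<in> interior (convex hull A)"
  shows "closed_add_subgroup (closure (add_subsemigroup_gen A))"
proof
  show add: "x + y \<in> closure (add_subsemigroup_gen A)"
    if "x \<in> closure (add_subsemigroup_gen A)" "y \<in> closure (add_subsemigroup_gen A)" for x y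
    using add_subsemigroup_gen.add that by (rule closure_add_closed)
  show neg: "-x \<in> closure (add_subsemigroup_gen A)"
    if "x \<in> closure (add_subsemigroup_gen A)" for x
    using neg_mem_closure_add_subsemigroup_gen[OF assms] that
    by (rule uminus_mem_closure_add_subsemigroup_gen)
  obtain a where "a \<in> A"
    using assms(2) by fastforce
  then have "a \<in> closure (add_subsemigroup_gen A)"
    using closure_subset add_subsemigroup_gen.gen by blast
  then show "0 \<in> closure (add_subsemigroup_gen A)"
    using add[OF _ neg] by fastforce
qed simp

theorem corollary4p4:
  fixes A :: "'a::euclidean_space set"
  assumes "finite A"
  shows "closure (add_subsemigroup_gen A) = UNIV \<longleftrightarrow>
           (0 \<in> interior (convex hull A) \<and>
            (\<forall>l :: 'a \<Rightarrow> real. linear l \<and> l ` A \<subseteq> \<int> \<longrightarrow> l = (\<lambda>x. 0)))"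
proof
  assume "closure (add_subsemigroup_gen A) = UNIV"
  then show "0 \<in> interior (convex hull A) \<and>
      (\<forall>l :: 'a \<Rightarrow> real. linear l \<and> l ` A \<subseteq> \<int> \<longrightarrow> l = (\<lambda>x. 0))"
    using dense_add_subsemigroup_gen_imp_0_in_interior
      dense_add_subsemigroup_gen_imp_no_integral_form by blast
next
  assume conds: "0 \<in> interior (convex hull A) \<and>
      (\<forall>l :: 'a \<Rightarrow> real. linear l \<and> l ` A \<subseteq> \<int> \<longrightarrow> l = (\<lambda>x. 0))"
  then interpret closed_add_subgroup "closure (add_subsemigroup_gen A)"
    using closed_add_subgroup_closure_add_subsemigroup_gen[OF assms] by blast
  show "closure (add_subsemigroup_gen A) = UNIV"
  proof (rule ccontr)
    assume "closure (add_subsemigroup_gen A) \<noteq> UNIV"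
    then obtain l :: "'a \<Rightarrow> real"
      where l: "linear l" "l \<noteq> (\<lambda>x. 0)" "\<And>x. x \<in> closure (add_subsemigroup_gen A) \<Longrightarrow> l x \<in> \<int>"
      using integral_form_if_proper by blast
    have "A \<subseteq> closure (add_subsemigroup_gen A)"
      using closure_subset add_subsemigroup_gen.gen by blast
    then have "l ` A \<subseteq> \<int>"
      using l(3) by blast
    then show False
      using conds l(1,2) by blast
  qed
qed

end
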